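(* Let $X$ be a Banach space and let $x\in S_X$ be a super $\Delta$-point. Then every relatively weakly open subset $W$ of $B_X$ containing $x$ has Kuratowski measure of non-compactness $\alpha(W)=2$. More precisely, for every such $W$ and every $\varepsilon>0$ there is a sequence $(x_n)\subseteq W$ with $\|x_i-x_j\|>2-\varepsilon$ for all $i\neq j$.
   Context: The Kuratowski measure of non-compactness $\alpha(A)$ of a non-empty bounded subset $A$ of a metric space is the infimum of all $\varepsilon>0$ such that $A$ can be covered by finitely many sets of diameter at most $\varepsilon$. An element $x\in S_X$ is a super $\Delta$-point if $\sup_{y\in V}\|x-y\|=2$ for every relatively weakly open subset $V$ of $B_X$ containing $x$. *)

theory Defs
  imports "HOL-Analysis.Analysis"
begin

definition weak_topology :: "('a::real_normed_vector) topology" where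
  "weak_topology = topology_generated_by
     {f -` S | (f :: 'a \<Rightarrow> real) S. bounded_linear f \<and> open S}"

definition rel_weakly_open_ball :: "('a::real_normed_vector) set \<Rightarrow> bool" where
  "rel_weakly_open_ball V \<longleftrightarrow> (\<exists>U. openin weak_topology U \<and> V = U \<inter> cball 0 1)"

definition super_delta_point :: "('a::real_normed_vector) \<Rightarrow> bool" where
  "super_delta_point x \<longleftrightarrow> norm x = 1 \<and>
     (\<forall>V. rel_weakly_open_ball V \<and> x \<in> V \<longrightarrow> (SUP y\<in>V. norm (x - y)) = 2)"

definition kuratowski_mnc :: "('a::metric_space) set \<Rightarrow> real" where
  "kuratowski_mnc A = Inf {\<epsilon>. \<epsilon> > 0 \<and> (\<exists>F. finite F \<and> A \<subseteq> \<Union>F \<and>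
        (\<forall>S\<in>F. bounded S \<and> diameter S \<le> \<epsilon>))}"

end

theory Submission
  imports Defs
begin

text \<open>Given finitely many weak neighbourhood conditions \<open>g > 1 - \<delta>\<close> that \<open>x\<close> satisfies, the super
  \<open>\<Delta>\<close>-property produces a point \<open>y\<close> of \<open>W\<close> satisfying them with \<open>\<parallel>x - y\<parallel> > 2 - \<delta>\<close>, and a
  norming functional \<open>f\<close> of \<open>x - y\<close> satisfies \<open>f x > 1 - \<delta>\<close>, \<open>f y < -1 + \<delta>\<close>. Adding \<open>f\<close> to the
  conditions and repeating yields points \<open>x\<^sub>n\<close> and functionals \<open>f\<^sub>n\<close> with \<open>f\<^sub>i x\<^sub>j > 1 - \<delta>\<close>
  for \<open>i < j\<close> and \<open>f\<^sub>i x\<^sub>i < -1 + \<delta>\<close>, hence \<open>\<parallel>x\<^sub>i - x\<^sub>j\<parallel> > 2 - 2\<delta>\<close>. Since \<open>W\<close> lies in the unit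
  ball, its Kuratowski measure is at most 2, and by pigeonhole any finite cover of such a
  sequence by sets of diameter \<open>e\<close> forces \<open>e > 2 - 2\<delta>\<close>. The norming functionals come from
  Hahn-Banach in its Zorn form: a minimal sublinear functional below the norm with
  \<open>q (-v) \<le> -\<parallel>v\<parallel>\<close> is linear.\<close>

section \<open>Sublinear functionals\<close>

definition sublinear :: "('a::real_vector \<Rightarrow> real) \<Rightarrow> bool" where
  "sublinear q \<longleftrightarrow> q 0 = 0 \<and> (\<forall>x y. q (x + y) \<le> q x + q y) \<and>
     (\<forall>c x. c > 0 \<longrightarrow> q (c *\<^sub>R x) = c * q x)"

lemma sublinear_add: "sublinear q \<Longrightarrow> q (x + y) \<le> q x + q y"
  by (simp add: sublinear_def)

lemma sublinear_scaleR: "sublinear q \<Longrightarrow> c \<ge> 0 \<Longrightarrow> q (c *\<^sub>R x) = c * q x"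
  by (cases "c = 0") (auto simp: sublinear_def)

lemma sublinear_minus_le: "sublinear q \<Longrightarrow> - q (- z) \<le> q z"
  using sublinear_add[of q z "- z"] by (simp add: sublinear_def)

lemma sublinear_norm: "sublinear (norm :: 'a::real_normed_vector \<Rightarrow> real)"
  unfolding sublinear_def by (auto intro: norm_triangle_ineq)

lemma bounded_linear_if_sublinear_odd:
  fixes q :: "'a::real_normed_vector \<Rightarrow> real"
  assumes q: "sublinear q" and odd: "\<And>w. q (- w) = - q w" and le: "\<And>z. q z \<le> norm z"
  shows "bounded_linear q"
proof (rule bounded_linear_intro[where K=1])
  show "q (x + y) = q x + q y" for x y
  proof (rule antisym)
    show "q (x + y) \<le> q x + q y" by (rule sublinear_add[OF q])
    show "q x + q y \<le> q (x + y)"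
      using sublinear_add[OF q, of "- x" "- y"] odd[of x] odd[of y] odd[of "x + y"]
      by (simp add: add.commute)
  qed
  show "q (r *\<^sub>R x) = r *\<^sub>R q x" for r x
  proof (cases "r \<ge> 0")
    case False
    have "q (r *\<^sub>R x) = - q ((- r) *\<^sub>R x)" using odd[of "(- r) *\<^sub>R x"] by simp
    then show ?thesis using sublinear_scaleR[OF q, of "- r"] False by simp
  qed (simp add: sublinear_scaleR[OF q])
  show "norm (q x) \<le> norm x * 1" for x
    using le[of x] le[of "- x"] odd[of x] by simp
qed

text \<open>The infimum over \<open>t \<ge> 0\<close> of \<open>q (z + t w) - t q w\<close> is the largest sublinear functional
  below \<open>q\<close> whose value at \<open>-w\<close> is \<open>-q w\<close>; a minimal \<open>q\<close> therefore satisfies \<open>q (-w) = -q w\<close>.\<close>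

definition shift_inf :: "('a::real_vector \<Rightarrow> real) \<Rightarrow> 'a \<Rightarrow> 'a \<Rightarrow> real" where
  "shift_inf q w z = Inf ((\<lambda>t. q (z + t *\<^sub>R w) - t * q w) ` {0..})"

lemma shift_inf_term_lower_bound:
  assumes "sublinear q" "t \<ge> 0"
  shows "- q (- z) \<le> q (z + t *\<^sub>R w) - t * q w"
proof -
  have "q (t *\<^sub>R w) = q ((z + t *\<^sub>R w) + - z)" by simp
  also have "\<dots> \<le> q (z + t *\<^sub>R w) + q (- z)" by (rule sublinear_add[OF assms(1)])
  finally show ?thesis using sublinear_scaleR[OF assms] by simp
qed

lemma shift_inf_le:
  assumes "sublinear q" "t \<ge> 0"
  shows "shift_inf q w z \<le> q (z + t *\<^sub>R w) - t * q w"
  unfolding shift_inf_def using assms shift_inf_term_lower_bound[OF assms(1)]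
  by (intro cInf_lower bdd_belowI[where m="- q (- z)"]) auto

lemma shift_inf_greatest:
  assumes "\<And>t. t \<ge> 0 \<Longrightarrow> m \<le> q (z + t *\<^sub>R w) - t * q w"
  shows "m \<le> shift_inf q w z"
  unfolding shift_inf_def using assms by (intro cInf_greatest) auto

lemma shift_inf_le_self: "sublinear q \<Longrightarrow> shift_inf q w z \<le> q z"
  using shift_inf_le[of q 0 w z] by simp

lemma shift_inf_minus: "sublinear q \<Longrightarrow> shift_inf q w (- w) \<le> - q w"
  using shift_inf_le[of q 1 w "- w"] by (simp add: sublinear_def)

lemma sublinear_shift_inf:
  assumes q: "sublinear q"
  shows "sublinear (shift_inf q w)"
  unfolding sublinear_def
proof (intro conjI allI impI)
  show "shift_inf q w 0 = 0"
  proof (rule antisym)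
    show "shift_inf q w 0 \<le> 0" using shift_inf_le_self[OF q, of w 0] q by (simp add: sublinear_def)
    show "0 \<le> shift_inf q w 0"
      using shift_inf_term_lower_bound[OF q, of _ 0 w] q
      by (intro shift_inf_greatest) (auto simp: sublinear_def)
  qed
next
  fix x y
  have sum: "shift_inf q w (x + y) \<le> (q (x + s *\<^sub>R w) - s * q w) + (q (y + t *\<^sub>R w) - t * q w)"
    if "s \<ge> 0" "t \<ge> 0" for s t
  proof -
    have "shift_inf q w (x + y) \<le> q ((x + s *\<^sub>R w) + (y + t *\<^sub>R w)) - (s + t) * q w"
      using shift_inf_le[OF q, of "s + t" w "x + y"] that by (simp add: algebra_simps)
    also have "\<dots> \<le> q (x + s *\<^sub>R w) + q (y + t *\<^sub>R w) - (s + t) * q w"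
      using sublinear_add[OF q] by simp
    finally show ?thesis by (simp add: algebra_simps)
  qed
  have "shift_inf q w (x + y) - (q (y + t *\<^sub>R w) - t * q w) \<le> shift_inf q w x" if "t \<ge> 0" for t
    using sum that by (intro shift_inf_greatest) force
  then have "shift_inf q w (x + y) - shift_inf q w x \<le> shift_inf q w y"
    by (intro shift_inf_greatest) force
  then show "shift_inf q w (x + y) \<le> shift_inf q w x + shift_inf q w y" by simp
next
  fix c :: real and x assume c: "c > 0"
  have rescale: "c * (q (x + t *\<^sub>R w) - t * q w) = q (c *\<^sub>R x + (c * t) *\<^sub>R w) - (c * t) * q w"
    if "t \<ge> 0" for t
    using sublinear_scaleR[OF q, of c "x + t *\<^sub>R w"] c
    by (simp add: algebra_simps scaleR_add_right)
  show "shift_inf q w (c *\<^sub>R x) = c * shift_inf q w x"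
  proof (rule antisym)
    have "shift_inf q w (c *\<^sub>R x) / c \<le> shift_inf q w x"
    proof (rule shift_inf_greatest)
      fix t :: real assume t: "t \<ge> 0"
      have "shift_inf q w (c *\<^sub>R x) \<le> c * (q (x + t *\<^sub>R w) - t * q w)"
        using shift_inf_le[OF q, of "c * t"] rescale[OF t] c t by simp
      then show "shift_inf q w (c *\<^sub>R x) / c \<le> q (x + t *\<^sub>R w) - t * q w"
        using c by (simp add: field_simps)
    qed
    then show "shift_inf q w (c *\<^sub>R x) \<le> c * shift_inf q w x" using c by (simp add: field_simps)
    show "c * shift_inf q w x \<le> shift_inf q w (c *\<^sub>R x)"
    proof (rule shift_inf_greatest)
      fix t :: real assume t: "t \<ge> 0"
      have "c * shift_inf q w x \<le> c * (q (x + (t / c) *\<^sub>R w) - (t / c) * q w)"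
        using shift_inf_le[OF q, of "t / c" w x] c t by (intro mult_left_mono) auto
      also have "\<dots> = q (c *\<^sub>R x + t *\<^sub>R w) - t * q w"
        using rescale[of "t / c"] c t by simp
      finally show "c * shift_inf q w x \<le> q (c *\<^sub>R x + t *\<^sub>R w) - t * q w" .
    qed
  qed
qed

section \<open>Norming functionals\<close>

definition norming_sublinear :: "'a::real_normed_vector \<Rightarrow> ('a \<Rightarrow> real) set" where
  "norming_sublinear v = {q. sublinear q \<and> (\<forall>z. q z \<le> norm z) \<and> q (- v) \<le> - norm v}"

lemma chain_Inf_in_norming_sublinear:
  assumes CA: "C \<subseteq> norming_sublinear v" and ne: "C \<noteq> {}"
    and chain: "\<And>a b. a \<in> C \<Longrightarrow> b \<in> C \<Longrightarrow> (\<forall>z. a z \<le> b z) \<or> (\<forall>z. b z \<le> a z)"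
  shows "(\<lambda>z. INF q\<in>C. q z) \<in> norming_sublinear v"
    and "\<And>q z. q \<in> C \<Longrightarrow> (INF q\<in>C. q z) \<le> q z"
proof -
  define u where "u z = (INF q\<in>C. q z)" for z
  have sl: "sublinear q" and le_norm: "\<And>z. q z \<le> norm z" and at_v: "q (- v) \<le> - norm v"
    if "q \<in> C" for q
    using CA that by (auto simp: norming_sublinear_def)
  have low: "u z \<le> q z" if "q \<in> C" for q z
    unfolding u_def using that sublinear_minus_le[OF sl] le_norm[of _ "- z"]
    by (intro cInf_lower bdd_belowI[where m="- norm (- z)"]) (auto, smt (verit))
  then show "\<And>q z. q \<in> C \<Longrightarrow> (INF q\<in>C. q z) \<le> q z" by (simp add: u_def)
  have greatest: "m \<le> u z" if "\<And>q. q \<in> C \<Longrightarrow> m \<le> q z" for m z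
    unfolding u_def using that ne by (intro cInf_greatest) auto
  obtain q0 where q0: "q0 \<in> C" using ne by auto
  have "sublinear u"
    unfolding sublinear_def
  proof (intro conjI allI impI)
    show "u 0 = 0"
      using low[OF q0, of 0] greatest[of 0 0] sl q0 by (force simp: sublinear_def)
  next
    fix x y
    have "u (x + y) \<le> a x + b y" if ab: "a \<in> C" "b \<in> C" for a b
    proof -
      obtain c where "c \<in> C" "c x \<le> a x" "c y \<le> b y"
        using chain[OF ab] ab by (metis order_refl)
      then show ?thesis using low[of c "x + y"] sublinear_add[OF sl[of c], of x y] by linarith
    qed
    then have "u (x + y) - b y \<le> u x" if "b \<in> C" for b
      using that by (intro greatest) force
    then have "u (x + y) - u x \<le> u y" by (intro greatest) force
    then show "u (x + y) \<le> u x + u y" by simp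
  next
    fix c :: real and x assume c: "c > 0"
    show "u (c *\<^sub>R x) = c * u x"
    proof (rule antisym)
      have "u (c *\<^sub>R x) / c \<le> u x"
      proof (rule greatest)
        fix q assume "q \<in> C"
        then show "u (c *\<^sub>R x) / c \<le> q x"
          using low[of q "c *\<^sub>R x"] sublinear_scaleR[OF sl, of q c x] c by (simp add: field_simps)
      qed
      then show "u (c *\<^sub>R x) \<le> c * u x" using c by (simp add: field_simps)
      show "c * u x \<le> u (c *\<^sub>R x)"
      proof (rule greatest)
        fix q assume "q \<in> C"
        then show "c * u x \<le> q (c *\<^sub>R x)"
          using low[of q x] sublinear_scaleR[OF sl, of q c x] c by simp
      qed
    qed
  qed
  moreover have "u z \<le> norm z" for z using low[OF q0, of z] le_norm[OF q0, of z] by linarith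
  moreover have "u (- v) \<le> - norm v" using low[OF q0, of "- v"] at_v[OF q0] by linarith
  ultimately have "u \<in> norming_sublinear v" by (simp add: norming_sublinear_def)
  then show "(\<lambda>z. INF q\<in>C. q z) \<in> norming_sublinear v" by (simp add: u_def[abs_def])
qed

lemma minimal_norming_sublinear_exists:
  "\<exists>m\<in>norming_sublinear v. \<forall>a\<in>norming_sublinear v. (\<forall>z. a z \<le> m z) \<longrightarrow> a = m"
proof -
  let ?below = "\<lambda>a b :: 'a \<Rightarrow> real. \<forall>z. b z \<le> a z"
  have "partial_order_on (norming_sublinear v) (relation_of ?below (norming_sublinear v))"
    by (rule partial_order_on_relation_ofI) (simp, meson order_trans, metis antisym ext)
  moreover have "\<exists>u\<in>norming_sublinear v. \<forall>a\<in>C. ?below a u"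
    if C: "C \<in> Chains (relation_of ?below (norming_sublinear v))" for C
  proof (cases "C = {}")
    case True
    have "shift_inf norm v \<in> norming_sublinear v"
      unfolding norming_sublinear_def using sublinear_shift_inf shift_inf_le_self shift_inf_minus
      by (blast intro: sublinear_norm)
    then show ?thesis using True by blast
  next
    case False
    have CA: "C \<subseteq> norming_sublinear v"
      using C unfolding Chains_def relation_of_def by blast
    have chain: "(\<forall>z. a z \<le> b z) \<or> (\<forall>z. b z \<le> a z)" if "a \<in> C" "b \<in> C" for a b
      using C that unfolding Chains_def relation_of_def by blast
    have "(\<lambda>z. INF q\<in>C. q z) \<in> norming_sublinear v"
      using CA False chain by (rule chain_Inf_in_norming_sublinear)
    moreover have "(INF q\<in>C. q z) \<le> a z" if "a \<in> C" for a z
      using CA False chain that by (rule chain_Inf_in_norming_sublinear)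
    ultimately show ?thesis by (intro bexI[where x="\<lambda>z. INF q\<in>C. q z"]) simp_all
  qed
  ultimately show ?thesis by (rule predicate_Zorn)
qed

lemma norming_functional:
  fixes v :: "'a::real_normed_vector"
  obtains f where "bounded_linear f" "\<And>z. \<bar>f z\<bar> \<le> norm z" "f v = norm v"
proof -
  obtain m where m: "m \<in> norming_sublinear v"
    and minimal: "\<And>a. a \<in> norming_sublinear v \<Longrightarrow> \<forall>z. a z \<le> m z \<Longrightarrow> a = m"
    using minimal_norming_sublinear_exists by blast
  have sl: "sublinear m" and le: "\<And>z. m z \<le> norm z" and mv: "m (- v) \<le> - norm v"
    using m by (auto simp: norming_sublinear_def)
  have odd: "m (- w) = - m w" for w
  proof -
    have "shift_inf m w \<in> norming_sublinear v"
      unfolding norming_sublinear_def using sublinear_shift_inf[OF sl]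
        shift_inf_le_self[OF sl, of w] le mv by (auto intro: order_trans)
    then have "shift_inf m w = m" using minimal shift_inf_le_self[OF sl] by blast
    then show ?thesis using shift_inf_minus[OF sl, of w] sublinear_minus_le[OF sl, of w] by simp
  qed
  show thesis
  proof
    show "bounded_linear m" using bounded_linear_if_sublinear_odd[OF sl odd le] .
    show "\<bar>m z\<bar> \<le> norm z" for z using le[of z] le[of "- z"] odd[of z] by simp
    show "m v = norm v" using le[of v] mv odd[of v] by simp
  qed
qed

lemma openin_weak_topology_halfspace:
  fixes f :: "'a::real_normed_vector \<Rightarrow> real"
  assumes "bounded_linear f"
  shows "openin weak_topology {y. a < f y}"
proof -
  have "f -` {a<..} \<in> {f -` S | (f :: 'a \<Rightarrow> real) S. bounded_linear f \<and> open S}"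
    by (rule CollectI, rule exI[where x=f], rule exI[where x="{a<..}"]) (simp add: assms)
  moreover have "{y. a < f y} = f -` {a<..}" by auto
  ultimately show ?thesis unfolding weak_topology_def by (simp add: topology_generated_by_Basis)
qed

lemma openin_weak_topology_Int_halfspaces:
  fixes F :: "('a::real_normed_vector \<Rightarrow> real) set"
  assumes "openin weak_topology U" "finite F" "\<forall>g\<in>F. bounded_linear g"
  shows "openin weak_topology (U \<inter> {y. \<forall>g\<in>F. a < g y})"
  using assms(2,3)
proof (induction F rule: finite_induct)
  case (insert g F)
  have "U \<inter> {y. \<forall>h\<in>insert g F. a < h y} = (U \<inter> {y. \<forall>h\<in>F. a < h y}) \<inter> {y. a < g y}"
    by auto
  then show ?case using insert openin_weak_topology_halfspace[of g a] by auto
qed (simp add: assms(1))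

section \<open>Separated sequences near a super \<open>\<Delta>\<close>-point\<close>

lemma super_delta_point_step:
  fixes x :: "'a::real_normed_vector"
  assumes sd: "super_delta_point x" and W: "rel_weakly_open_ball W" "x \<in> W" and \<delta>: "\<delta> > 0"
    and F: "finite F" "\<forall>g\<in>F. bounded_linear g \<and> 1 - \<delta> < g x"
  obtains y f where "y \<in> W" "\<forall>g\<in>F. 1 - \<delta> < g y"
    "bounded_linear f" "\<forall>z. \<bar>f z\<bar> \<le> norm z" "1 - \<delta> < f x" "f y < - 1 + \<delta>"
proof -
  obtain U where U: "openin weak_topology U" and W_eq: "W = U \<inter> cball 0 1"
    using W(1) unfolding rel_weakly_open_ball_def by blast
  define V where "V = (U \<inter> {y. \<forall>g\<in>F. 1 - \<delta> < g y}) \<inter> cball 0 1"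
  have "rel_weakly_open_ball V"
    unfolding rel_weakly_open_ball_def V_def
    using openin_weak_topology_Int_halfspaces[OF U F(1)] F(2) by blast
  moreover have xV: "x \<in> V" using W(2) F(2) unfolding V_def W_eq by auto
  ultimately have nx: "norm x = 1" and sup: "(SUP y\<in>V. norm (x - y)) = 2"
    using sd unfolding super_delta_point_def by auto
  obtain y where yV: "y \<in> V" and far: "2 - \<delta> < norm (x - y)"
  proof (rule ccontr)
    assume "\<not> thesis"
    then have "(SUP y\<in>V. norm (x - y)) \<le> 2 - \<delta>"
      using that xV by (intro cSUP_least) force+
    then show False using sup \<delta> by simp
  qed
  obtain f where f: "bounded_linear f" "\<And>z. \<bar>f z\<bar> \<le> norm z" "f (x - y) = norm (x - y)"
    using norming_functional by blast
  have "f (x - y) = f x - f y" using f(1) by (simp add: linear_simps)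
  moreover have "f x \<le> 1" using f(2)[of x] nx by simp
  moreover have "- f y \<le> 1" using f(2)[of y] yV unfolding V_def by (auto simp: abs_le_iff)
  ultimately have "1 - \<delta> < f x" "f y < - 1 + \<delta>" using far f(3) by linarith+
  moreover have "y \<in> W" "\<forall>g\<in>F. 1 - \<delta> < g y" using yV unfolding V_def W_eq by auto
  ultimately show thesis using that f by blast
qed

lemma choice_with_finite_history:
  fixes G :: "'f set" and P :: "'f set \<Rightarrow> 'y \<Rightarrow> 'f \<Rightarrow> bool"
  assumes "\<And>F. finite F \<Longrightarrow> F \<subseteq> G \<Longrightarrow> \<exists>y f. f \<in> G \<and> P F y f"
  shows "\<exists>fs ys. \<forall>n :: nat. fs n \<in> G \<and> P (fs ` {..<n}) (ys n) (fs n)"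
proof -
  define Q where "Q h n r \<longleftrightarrow> snd r \<in> G \<and> P ((snd \<circ> h) ` {..<n}) (fst r) (snd r)"
    for h :: "nat \<Rightarrow> 'y \<times> 'f" and n r
  have "\<exists>h. \<forall>n. Q h n (h n)"
  proof (rule dependent_wellorder_choice)
    show "Q h n r = Q h' n r" if "\<And>m. m < n \<Longrightarrow> h m = h' m" for h h' and n :: nat and r
    proof -
      have "(snd \<circ> h) ` {..<n} = (snd \<circ> h') ` {..<n}" using that by (intro image_cong) auto
      then show ?thesis unfolding Q_def by simp
    qed
    show "\<exists>r. Q h n r" if "\<And>m. m < n \<Longrightarrow> Q h m (h m)" for h n
      using assms[of "(snd \<circ> h) ` {..<n}"] that unfolding Q_def by fastforce
  qed
  then obtain h where "\<And>n. Q h n (h n)" by blast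
  then show ?thesis by (intro exI[of _ "snd \<circ> h"] exI[of _ "fst \<circ> h"]) (simp add: Q_def)
qed

lemma super_delta_point_separated_sequence:
  fixes x :: "'a::real_normed_vector"
  assumes sd: "super_delta_point x" and W: "rel_weakly_open_ball W" "x \<in> W" and \<epsilon>: "\<epsilon> > 0"
  shows "\<exists>xs :: nat \<Rightarrow> 'a. range xs \<subseteq> W \<and> (\<forall>i j. i \<noteq> j \<longrightarrow> 2 - \<epsilon> < norm (xs i - xs j))"
proof -
  define \<delta> where "\<delta> = \<epsilon> / 2"
  have \<delta>: "\<delta> > 0" using \<epsilon> by (simp add: \<delta>_def)
  define G where
    "G = {g :: 'a \<Rightarrow> real. bounded_linear g \<and> (\<forall>z. \<bar>g z\<bar> \<le> norm z) \<and> 1 - \<delta> < g x}"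
  define P where
    "P F y f \<longleftrightarrow> y \<in> W \<and> (\<forall>g\<in>F. 1 - \<delta> < g y) \<and> f y < - 1 + \<delta>" for F y and f :: "'a \<Rightarrow> real"
  have "\<exists>y f. f \<in> G \<and> P F y f" if F: "finite F" "F \<subseteq> G" for F
  proof -
    have "\<forall>g\<in>F. bounded_linear g \<and> 1 - \<delta> < g x" using F(2) unfolding G_def by blast
    then show ?thesis
      by (rule super_delta_point_step[OF sd W \<delta> F(1)]) (unfold G_def P_def, blast)
  qed
  then obtain fs xs where seq: "\<And>n :: nat. fs n \<in> G \<and> P (fs ` {..<n}) (xs n) (fs n)"
    using choice_with_finite_history[of G P] by blast
  have far: "2 - \<epsilon> < norm (xs j - xs i)" if "i < j" for i j
  proof -
    have "1 - \<delta> < fs i (xs j)" "fs i (xs i) < - 1 + \<delta>"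
      using seq[of j] seq[of i] that unfolding P_def by auto
    moreover have "fs i (xs j - xs i) \<le> norm (xs j - xs i)"
      using seq[of i] unfolding G_def by (auto dest: abs_le_D1)
    moreover have "fs i (xs j - xs i) = fs i (xs j) - fs i (xs i)"
      using seq[of i] unfolding G_def by (simp add: linear_simps)
    ultimately show ?thesis unfolding \<delta>_def by linarith
  qed
  have "range xs \<subseteq> W" using seq unfolding P_def by auto
  moreover have "2 - \<epsilon> < norm (xs i - xs j)" if "i \<noteq> j" for i j
    using that far[of i j] far[of j i] by (cases "i < j") (simp_all add: norm_minus_commute)
  ultimately show ?thesis by blast
qed

section \<open>The Kuratowski measure\<close>

lemma kuratowski_mnc_le:
  assumes "bounded A" "diameter A \<le> d" "d > 0"
  shows "kuratowski_mnc A \<le> d"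
  unfolding kuratowski_mnc_def
proof (rule cInf_lower)
  show "d \<in> {\<epsilon>. \<epsilon> > 0 \<and> (\<exists>F. finite F \<and> A \<subseteq> \<Union>F \<and> (\<forall>S\<in>F. bounded S \<and> diameter S \<le> \<epsilon>))}"
    using assms by (intro CollectI conjI exI[of _ "{A}"]) auto
qed (rule bdd_belowI[where m=0], simp)

lemma separated_sequence_less_cover_diameter:
  fixes xs :: "nat \<Rightarrow> 'a::metric_space"
  assumes F: "finite F" "range xs \<subseteq> \<Union>F" "\<forall>S\<in>F. bounded S \<and> diameter S \<le> e"
    and sep: "\<And>i j. i \<noteq> j \<Longrightarrow> r < dist (xs i) (xs j)"
  shows "r < e"
proof -
  have "\<forall>n. \<exists>S. S \<in> F \<and> xs n \<in> S" using F(2) by blast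
  then obtain g where gF: "\<And>n. g n \<in> F" and xs_g: "\<And>n. xs n \<in> g n"
    using choice[of "\<lambda>n S. S \<in> F \<and> xs n \<in> S"] by blast
  have "finite (range g)" using gF F(1) by (meson finite_subset image_subsetI)
  then have "\<not> inj g" using finite_imageD infinite_UNIV_nat by blast
  then obtain i j where ij: "i \<noteq> j" "g i = g j" unfolding inj_def by blast
  have "bounded (g i)" "diameter (g i) \<le> e" using F(3) gF[of i] by auto
  moreover have "dist (xs i) (xs j) \<le> diameter (g i)"
    using \<open>bounded (g i)\<close> xs_g[of i] xs_g[of j] ij(2) by (simp add: diameter_bounded_bound)
  ultimately show ?thesis using sep[OF ij(1)] by linarith
qed

lemma kuratowski_mnc_ge:
  fixes A :: "'a::metric_space set"
  assumes "bounded A"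
    and sep: "\<And>\<eta>. \<eta> > 0 \<Longrightarrow> \<exists>xs :: nat \<Rightarrow> 'a. range xs \<subseteq> A \<and> (\<forall>i j. i \<noteq> j \<longrightarrow> r - \<eta> < dist (xs i) (xs j))"
  shows "r \<le> kuratowski_mnc A"
proof -
  define K where "K = {\<epsilon>. \<epsilon> > 0 \<and> (\<exists>F. finite F \<and> A \<subseteq> \<Union>F \<and> (\<forall>S\<in>F. bounded S \<and> diameter S \<le> \<epsilon>))}"
  have "diameter A + 1 \<in> K"
    unfolding K_def using assms(1) diameter_ge_0[OF assms(1)]
    by (intro CollectI conjI exI[of _ "{A}"]) auto
  then have "K \<noteq> {}" by blast
  moreover have "r \<le> e" if "e \<in> K" for e
  proof -
    obtain F where F: "finite F" "A \<subseteq> \<Union>F" "\<forall>S\<in>F. bounded S \<and> diameter S \<le> e"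
      using \<open>e \<in> K\<close> unfolding K_def by blast
    show "r \<le> e"
    proof (rule field_le_epsilon)
      fix \<eta> :: real assume "\<eta> > 0"
      then obtain xs :: "nat \<Rightarrow> 'a" where xs: "range xs \<subseteq> A"
        and far: "\<forall>i j. i \<noteq> j \<longrightarrow> r - \<eta> < dist (xs i) (xs j)"
        using sep by blast
      have cover: "range xs \<subseteq> \<Union>F" using xs F(2) by (rule order_trans)
      have "r - \<eta> < e"
        using F(1) cover F(3) by (rule separated_sequence_less_cover_diameter) (use far in blast)
      then show "r \<le> e + \<eta>" by simp
    qed
  qed
  ultimately have "r \<le> Inf K" by (rule cInf_greatest)
  then show ?thesis unfolding kuratowski_mnc_def K_def .
qed

theorem mainTheorem19:
  fixes x :: "'a::banach" and W :: "'a set"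
  assumes "super_delta_point x"
    and "rel_weakly_open_ball W" and "x \<in> W"
  shows "kuratowski_mnc W = 2 \<and>
    (\<forall>\<epsilon>>0. \<exists>xs :: nat \<Rightarrow> 'a. range xs \<subseteq> W \<and>
        (\<forall>i j. i \<noteq> j \<longrightarrow> norm (xs i - xs j) > 2 - \<epsilon>))"
proof -
  have sep: "\<forall>\<epsilon>>0. \<exists>xs :: nat \<Rightarrow> 'a. range xs \<subseteq> W \<and>
      (\<forall>i j. i \<noteq> j \<longrightarrow> norm (xs i - xs j) > 2 - \<epsilon>)"
    by (intro allI impI super_delta_point_separated_sequence[OF assms])
  have ball: "W \<subseteq> cball 0 1" using assms(2) unfolding rel_weakly_open_ball_def by blast
  then have "bounded W" by (rule bounded_subset[OF bounded_cball])
  moreover have "diameter W \<le> 2"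
    using ball by (intro diameter_le) (smt (verit) mem_cball_0 norm_triangle_ineq4 subsetD)+
  ultimately have "kuratowski_mnc W \<le> 2" by (rule kuratowski_mnc_le) simp
  moreover have "2 \<le> kuratowski_mnc W"
  proof (rule kuratowski_mnc_ge[OF \<open>bounded W\<close>])
    fix \<eta> :: real assume "\<eta> > 0"
    with sep obtain xs :: "nat \<Rightarrow> 'a"
      where "range xs \<subseteq> W" "\<forall>i j. i \<noteq> j \<longrightarrow> norm (xs i - xs j) > 2 - \<eta>"
      by blast
    then show "\<exists>xs :: nat \<Rightarrow> 'a. range xs \<subseteq> W \<and> (\<forall>i j. i \<noteq> j \<longrightarrow> 2 - \<eta> < dist (xs i) (xs j))"
      by (auto simp: dist_norm)
  qed
  ultimately have "kuratowski_mnc W = 2" by (rule antisym)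
  then show ?thesis using sep by (rule conjI)
qed

end
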